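(* Let $(X,d)$ be a complete b-metric space with coefficient $s \geq 1$, and let $T: X \to X$ be a continuous PA-contraction with contraction constant $\alpha \in (0,1)$ such that $s\alpha < 1$. Then $T$ has a unique fixed point in $X$, and for every $x \in X$ the sequence $\{T^n x\}_{n\ge 0}$ converges to this fixed point.
   Context: A b-metric space with coefficient $s \ge 1$ is a nonempty set $X$ with a function $d: X\times X \to [0,\infty)$ such that: $d(x,y)=0$ iff $x=y$; $d(x,y)=d(y,x)$ for all $x,y$; and $d(x,z) \le s\,(d(x,y)+d(y,z))$ for all $x,y,z \in X$. A sequence $\{x_n\}$ is Cauchy if $\lim_{m,n\to\infty} d(x_n,x_m)=0$, it converges to $x$ if $d(x_n,x)\to 0$, and the space is complete if every Cauchy sequence converges in $X$; continuity of $T$ means $x_n \to x$ implies $Tx_n \to Tx$. A mapping $T: X\to X$ is a PA-contraction (path-averaged contraction) with contraction constant $\alpha$ if $\alpha \in (0,1)$ and there exists $N \in \mathbb{N}$ such that for all $x,y \in X$ and all $n \ge N$, $$\sum_{k=0}^{n-1} d(T^{k+1}x, T^{k+1}y) \le \alpha \sum_{k=0}^{n-1} d(T^k x, T^k y),$$ where $T^0$ is the identity. *)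

theory Defs
  imports Complex_Main
begin

definition b_metric :: "'a set \<Rightarrow> ('a \<Rightarrow> 'a \<Rightarrow> real) \<Rightarrow> real \<Rightarrow> bool" where
  "b_metric X d s \<longleftrightarrow> X \<noteq> {} \<and> s \<ge> 1 \<and>
     (\<forall>x\<in>X. \<forall>y\<in>X. d x y \<ge> 0) \<and>
     (\<forall>x\<in>X. \<forall>y\<in>X. d x y = 0 \<longleftrightarrow> x = y) \<and>
     (\<forall>x\<in>X. \<forall>y\<in>X. d x y = d y x) \<and>
     (\<forall>x\<in>X. \<forall>y\<in>X. \<forall>z\<in>X. d x z \<le> s * (d x y + d y z))"

definition b_converges :: "('a \<Rightarrow> 'a \<Rightarrow> real) \<Rightarrow> (nat \<Rightarrow> 'a) \<Rightarrow> 'a \<Rightarrow> bool" where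
  "b_converges d u x \<longleftrightarrow> (\<lambda>n. d (u n) x) \<longlonglongrightarrow> 0"

definition b_Cauchy :: "('a \<Rightarrow> 'a \<Rightarrow> real) \<Rightarrow> (nat \<Rightarrow> 'a) \<Rightarrow> bool" where
  "b_Cauchy d u \<longleftrightarrow> (\<forall>e>0. \<exists>N. \<forall>m\<ge>N. \<forall>n\<ge>N. d (u n) (u m) < e)"

definition b_complete :: "'a set \<Rightarrow> ('a \<Rightarrow> 'a \<Rightarrow> real) \<Rightarrow> bool" where
  "b_complete X d \<longleftrightarrow> (\<forall>u. (\<forall>n. u n \<in> X) \<and> b_Cauchy d u \<longrightarrow> (\<exists>x\<in>X. b_converges d u x))"

definition b_continuous :: "'a set \<Rightarrow> ('a \<Rightarrow> 'a \<Rightarrow> real) \<Rightarrow> ('a \<Rightarrow> 'a) \<Rightarrow> bool" where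
  "b_continuous X d T \<longleftrightarrow> (\<forall>u x. (\<forall>n. u n \<in> X) \<and> x \<in> X \<and> b_converges d u x
      \<longrightarrow> b_converges d (\<lambda>n. T (u n)) (T x))"

definition PA_contraction :: "'a set \<Rightarrow> ('a \<Rightarrow> 'a \<Rightarrow> real) \<Rightarrow> ('a \<Rightarrow> 'a) \<Rightarrow> real \<Rightarrow> bool" where
  "PA_contraction X d T \<alpha> \<longleftrightarrow> 0 < \<alpha> \<and> \<alpha> < 1 \<and>
     (\<exists>N::nat. \<forall>x\<in>X. \<forall>y\<in>X. \<forall>n\<ge>N.
        (\<Sum>k<n. d ((T ^^ (k+1)) x) ((T ^^ (k+1)) y)) \<le> \<alpha> * (\<Sum>k<n. d ((T ^^ k) x) ((T ^^ k) y)))"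

end

theory Submission imports Defs begin

(* Applied to x and T x, the PA-inequality bounds the tail sums R j of the step lengths
   a n = d (T^n x) (T^(n+1) x) by R (j+1) <= alpha * R j, so the steps decay like alpha^n.
   The b-triangle inequality weights the i-th of p consecutive steps by s^(i+1); since
   s * alpha < 1 the orbit is still Cauchy, and by continuity its limit is fixed.
   For fixed points p, q the PA-inequality reads n d(p,q) <= alpha n d(p,q), so p = q. *)

lemma partial_sums_le_if_shifted_partial_sums_le:
  fixes a :: "nat \<Rightarrow> real"
  assumes nonneg: "\<And>k. 0 \<le> a k" and "0 \<le> \<alpha>" "\<alpha> < 1"
    and shifted: "\<And>n. N \<le> n \<Longrightarrow> (\<Sum>k<n. a (Suc k)) \<le> \<alpha> * (\<Sum>k<n. a k)"
  shows "(\<Sum>k<n. a k) \<le> a 0 / (1 - \<alpha>)"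
proof -
  let ?m = "max n N"
  have "(\<Sum>k<Suc ?m. a k) - a 0 = (\<Sum>k<?m. a (Suc k))"
    using sum.lessThan_Suc_shift[of a ?m] by simp
  also have "\<dots> \<le> \<alpha> * (\<Sum>k<?m. a k)" using shifted by simp
  also have "\<dots> \<le> \<alpha> * (\<Sum>k<Suc ?m. a k)"
    using nonneg \<open>0 \<le> \<alpha>\<close> by (intro mult_left_mono) auto
  finally have "(1 - \<alpha>) * (\<Sum>k<Suc ?m. a k) \<le> a 0" by (simp add: algebra_simps)
  then have "(\<Sum>k<Suc ?m. a k) \<le> a 0 / (1 - \<alpha>)" using \<open>\<alpha> < 1\<close> by (simp add: field_simps)
  moreover have "(\<Sum>k<n. a k) \<le> (\<Sum>k<Suc ?m. a k)" by (rule sum_mono2) (auto simp: nonneg)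
  ultimately show ?thesis by linarith
qed

lemma suminf_le_if_shifted_partial_sums_le:
  fixes a :: "nat \<Rightarrow> real"
  assumes nonneg: "\<And>k. 0 \<le> a k" and "0 \<le> \<alpha>" "\<alpha> < 1"
    and shifted: "\<And>n. N \<le> n \<Longrightarrow> (\<Sum>k<n. a (Suc k)) \<le> \<alpha> * (\<Sum>k<n. a k)"
  shows "summable a" and "suminf a \<le> a 0 / (1 - \<alpha>)"
    and "(\<Sum>k. a (Suc k)) \<le> \<alpha> * suminf a"
proof -
  note partial = partial_sums_le_if_shifted_partial_sums_le[OF assms]
  show sa: "summable a" by (rule summableI_nonneg_bounded[OF nonneg partial])
  show "suminf a \<le> a 0 / (1 - \<alpha>)" by (rule suminf_le_const[OF sa partial])
  have "summable (\<lambda>k. a (Suc k))" using sa by (simp add: summable_Suc_iff)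
  then show "(\<Sum>k. a (Suc k)) \<le> \<alpha> * suminf a"
    using shifted by (intro LIMSEQ_le[OF summable_LIMSEQ tendsto_mult_left[OF summable_LIMSEQ[OF sa]]]) auto
qed

lemma le_geometric_if_shifted_partial_sums_le:
  fixes a :: "nat \<Rightarrow> real"
  assumes nonneg: "\<And>k. 0 \<le> a k" and \<alpha>: "0 \<le> \<alpha>" "\<alpha> < 1"
    and shifted: "\<And>j n. N \<le> n \<Longrightarrow> (\<Sum>k<n. a (Suc (k + j))) \<le> \<alpha> * (\<Sum>k<n. a (k + j))"
  shows "a j \<le> \<alpha> ^ j * (a 0 / (1 - \<alpha>))"
proof -
  define R where "R j = (\<Sum>k. a (k + j))" for j
  have tail: "summable (\<lambda>k. a (k + j))" "(\<Sum>k. a (k + j)) \<le> a j / (1 - \<alpha>)"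
    "(\<Sum>k. a (Suc k + j)) \<le> \<alpha> * (\<Sum>k. a (k + j))" for j
    using suminf_le_if_shifted_partial_sums_le[of "\<lambda>k. a (k + j)" \<alpha> N] nonneg \<alpha> shifted by simp_all
  have R_Suc: "R (Suc j) \<le> \<alpha> * R j" for j using tail(3)[of j] unfolding R_def by simp
  have R_geometric: "R j \<le> \<alpha> ^ j * R 0" for j
  proof (induction j)
    case (Suc j)
    have "R (Suc j) \<le> \<alpha> * R j" by (rule R_Suc)
    also have "\<dots> \<le> \<alpha> * (\<alpha> ^ j * R 0)" using Suc \<alpha> by (intro mult_left_mono) auto
    finally show ?case by simp
  qed simp
  have "a j \<le> R j"
    using sum_le_suminf[of "\<lambda>k. a (k + j)" "{0}"] tail(1)[of j] nonneg unfolding R_def by simp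
  also have "\<dots> \<le> \<alpha> ^ j * R 0" by (rule R_geometric)
  also have "\<dots> \<le> \<alpha> ^ j * (a 0 / (1 - \<alpha>))"
    using tail(2)[of 0] \<alpha> unfolding R_def by (intro mult_left_mono) auto
  finally show ?thesis .
qed

lemma b_metric_nonneg: "b_metric X d s \<Longrightarrow> x \<in> X \<Longrightarrow> y \<in> X \<Longrightarrow> 0 \<le> d x y"
  unfolding b_metric_def by blast

lemma b_metric_eq_0_iff: "b_metric X d s \<Longrightarrow> x \<in> X \<Longrightarrow> y \<in> X \<Longrightarrow> d x y = 0 \<longleftrightarrow> x = y"
  unfolding b_metric_def by blast

lemma b_metric_sym: "b_metric X d s \<Longrightarrow> x \<in> X \<Longrightarrow> y \<in> X \<Longrightarrow> d x y = d y x"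
  unfolding b_metric_def by blast

lemma b_metric_triangle:
  "b_metric X d s \<Longrightarrow> x \<in> X \<Longrightarrow> y \<in> X \<Longrightarrow> z \<in> X \<Longrightarrow> d x z \<le> s * (d x y + d y z)"
  unfolding b_metric_def by blast

lemma b_metric_coeff_ge_1: "b_metric X d s \<Longrightarrow> 1 \<le> s"
  unfolding b_metric_def by blast

lemma b_metric_dist_le_weighted_steps:
  assumes bm: "b_metric X d s" and uX: "\<And>n. u n \<in> X"
  shows "d (u n) (u (n + p)) \<le> (\<Sum>i<p. s ^ Suc i * d (u (n + i)) (u (Suc (n + i))))"
proof (induction p arbitrary: n)
  case 0
  show ?case using b_metric_eq_0_iff[OF bm uX uX, of n n] by simp
next
  case (Suc p)
  have "d (u n) (u (n + Suc p)) \<le> s * (d (u n) (u (Suc n)) + d (u (Suc n)) (u (Suc n + p)))"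
    using b_metric_triangle[OF bm uX uX uX] by simp
  also have "\<dots> \<le> s * (d (u n) (u (Suc n)) + (\<Sum>i<p. s ^ Suc i * d (u (Suc n + i)) (u (Suc (Suc n + i)))))"
    using Suc.IH[of "Suc n"] b_metric_coeff_ge_1[OF bm] by (intro mult_left_mono) auto
  also have "\<dots> = (\<Sum>i<Suc p. s ^ Suc i * d (u (n + i)) (u (Suc (n + i))))"
    by (simp only: sum.lessThan_Suc_shift) (simp add: sum_distrib_left algebra_simps)
  finally show ?case .
qed

lemma b_metric_dist_le_if_steps_le_geometric:
  assumes bm: "b_metric X d s" and uX: "\<And>n. u n \<in> X"
    and "0 \<le> \<alpha>" "s * \<alpha> < 1"
    and steps: "\<And>n. d (u n) (u (Suc n)) \<le> \<alpha> ^ n * C"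
  shows "d (u n) (u (n + p)) \<le> s * C / (1 - s * \<alpha>) * \<alpha> ^ n"
proof -
  have s: "1 \<le> s" by (rule b_metric_coeff_ge_1[OF bm])
  define q where "q = s * \<alpha>"
  have q: "0 \<le> q" "q < 1" using s assms(3,4) unfolding q_def by auto
  have "0 \<le> C" using steps[of 0] b_metric_nonneg[OF bm uX uX, of 0 "Suc 0"] by simp
  have "d (u n) (u (n + p)) \<le> (\<Sum>i<p. s ^ Suc i * d (u (n + i)) (u (Suc (n + i))))"
    by (rule b_metric_dist_le_weighted_steps[OF bm uX])
  also have "\<dots> \<le> (\<Sum>i<p. s ^ Suc i * (\<alpha> ^ (n + i) * C))"
    using steps s by (intro sum_mono mult_left_mono) auto
  also have "\<dots> = s * \<alpha> ^ n * C * (\<Sum>i<p. q ^ i)"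
    unfolding q_def by (simp add: sum_distrib_left power_add power_mult_distrib algebra_simps)
  also have "(\<Sum>i<p. q ^ i) \<le> 1 / (1 - q)"
    using sum_gp_strict[of q p] q by (simp add: divide_right_mono)
  then have "s * \<alpha> ^ n * C * (\<Sum>i<p. q ^ i) \<le> s * \<alpha> ^ n * C * (1 / (1 - q))"
    using s \<open>0 \<le> \<alpha>\<close> \<open>0 \<le> C\<close> by (intro mult_left_mono) auto
  finally show ?thesis unfolding q_def by (simp add: mult.commute mult.left_commute)
qed

lemma b_Cauchy_if_steps_le_geometric:
  assumes bm: "b_metric X d s" and uX: "\<And>n. u n \<in> X"
    and "0 \<le> \<alpha>" "s * \<alpha> < 1"
    and steps: "\<And>n. d (u n) (u (Suc n)) \<le> \<alpha> ^ n * C"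
  shows "b_Cauchy d u"
proof -
  define K where "K = s * C / (1 - s * \<alpha>)"
  note tail = b_metric_dist_le_if_steps_le_geometric[OF assms, folded K_def]
  have "\<alpha> < 1"
    using b_metric_coeff_ge_1[OF bm] assms(3,4) mult_right_mono[of 1 s \<alpha>] by simp
  have "0 \<le> K"
    using tail[of 0 0] b_metric_nonneg[OF bm uX uX, of 0 0] by simp
  have dist_le: "d (u n) (u m) \<le> K * \<alpha> ^ M" if "M \<le> n" "M \<le> m" for n m M
  proof -
    have "d (u n) (u m) \<le> K * \<alpha> ^ min n m"
      using tail[of n "m - n"] tail[of m "n - m"] b_metric_sym[OF bm uX uX, of n m]
      by (cases "n \<le> m") auto
    also have "\<dots> \<le> K * \<alpha> ^ M"
      using that \<open>0 \<le> \<alpha>\<close> \<open>\<alpha> < 1\<close> \<open>0 \<le> K\<close> by (intro mult_left_mono power_decreasing) auto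
    finally show ?thesis .
  qed
  have "(\<lambda>M. K * \<alpha> ^ M) \<longlonglongrightarrow> 0"
    using \<open>0 \<le> \<alpha>\<close> \<open>\<alpha> < 1\<close> by (intro tendsto_mult_right_zero LIMSEQ_power_zero) simp
  show ?thesis
    unfolding b_Cauchy_def
  proof (intro allI impI)
    fix e :: real
    assume "0 < e"
    then obtain M where "K * \<alpha> ^ M < e"
      using order_tendstoD(2)[OF \<open>(\<lambda>M. K * \<alpha> ^ M) \<longlonglongrightarrow> 0\<close>] by (auto simp: eventually_sequentially)
    then show "\<exists>N. \<forall>m\<ge>N. \<forall>n\<ge>N. d (u n) (u m) < e"
      using dist_le by (meson le_less_trans)
  qed
qed

lemma b_converges_unique:
  assumes bm: "b_metric X d s" and uX: "\<And>n. u n \<in> X" and "p \<in> X" "q \<in> X"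
    and "b_converges d u p" "b_converges d u q"
  shows "p = q"
proof -
  have "(\<lambda>n. s * (d (u n) p + d (u n) q)) \<longlonglongrightarrow> 0"
    using assms(5,6) unfolding b_converges_def by (simp add: tendsto_add_zero tendsto_mult_right_zero)
  moreover have "d p q \<le> s * (d (u n) p + d (u n) q)" for n
    using b_metric_triangle[OF bm \<open>p \<in> X\<close> uX \<open>q \<in> X\<close>] b_metric_sym[OF bm \<open>p \<in> X\<close> uX] by simp
  ultimately have "d p q \<le> 0" by (intro LIMSEQ_le_const) auto
  then show ?thesis
    using b_metric_nonneg[OF bm assms(3,4)] b_metric_eq_0_iff[OF bm assms(3,4)] by simp
qed

lemma funpow_closed: "\<forall>x\<in>X. T x \<in> X \<Longrightarrow> x \<in> X \<Longrightarrow> (T ^^ n) x \<in> X"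
  by (induction n) auto

lemma b_converges_orbit_imp_fixed_point:
  assumes bm: "b_metric X d s" and TX: "\<forall>x\<in>X. T x \<in> X" and cont: "b_continuous X d T"
    and "x \<in> X" "p \<in> X" and lim: "b_converges d (\<lambda>n. (T ^^ n) x) p"
  shows "T p = p"
proof -
  have orbitX: "(T ^^ n) x \<in> X" for n by (rule funpow_closed[OF TX \<open>x \<in> X\<close>])
  have "b_converges d (\<lambda>n. (T ^^ Suc n) x) (T p)"
    using cont orbitX \<open>p \<in> X\<close> lim unfolding b_continuous_def by simp
  moreover have "b_converges d (\<lambda>n. (T ^^ Suc n) x) p"
    using lim unfolding b_converges_def by (rule LIMSEQ_Suc)
  ultimately show ?thesis
    using b_converges_unique[OF bm orbitX] TX \<open>p \<in> X\<close> by blast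
qed

lemma PA_contractionE:
  assumes "PA_contraction X d T \<alpha>"
  obtains N where "0 < \<alpha>" "\<alpha> < 1"
    and "\<And>x y n. x \<in> X \<Longrightarrow> y \<in> X \<Longrightarrow> N \<le> n \<Longrightarrow>
      (\<Sum>k<n. d ((T ^^ Suc k) x) ((T ^^ Suc k) y)) \<le> \<alpha> * (\<Sum>k<n. d ((T ^^ k) x) ((T ^^ k) y))"
  using assms unfolding PA_contraction_def Suc_eq_plus1 by blast

lemma PA_contraction_fixed_point_unique:
  assumes bm: "b_metric X d s" and pa: "PA_contraction X d T \<alpha>"
    and "p \<in> X" "T p = p" "q \<in> X" "T q = q"
  shows "p = q"
proof -
  obtain N where \<alpha>: "0 < \<alpha>" "\<alpha> < 1" and contr: "\<And>x y n. x \<in> X \<Longrightarrow> y \<in> X \<Longrightarrow> N \<le> n \<Longrightarrow>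
      (\<Sum>k<n. d ((T ^^ Suc k) x) ((T ^^ Suc k) y)) \<le> \<alpha> * (\<Sum>k<n. d ((T ^^ k) x) ((T ^^ k) y))"
    using PA_contractionE[OF pa] by blast
  have "(T ^^ k) p = p" "(T ^^ k) q = q" for k
    using \<open>T p = p\<close> \<open>T q = q\<close> by (induction k) auto
  then have "real (Suc N) * d p q \<le> \<alpha> * (real (Suc N) * d p q)"
    using contr[OF \<open>p \<in> X\<close> \<open>q \<in> X\<close>, of "Suc N"] by (simp del: funpow.simps)
  then have "d p q \<le> 0"
    using \<alpha> by (simp add: mult_le_cancel_right1 mult.assoc[symmetric] mult_le_cancel_left1)
  then show ?thesis
    using b_metric_nonneg[OF bm assms(3,5)] b_metric_eq_0_iff[OF bm assms(3,5)] by simp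
qed

lemma PA_contraction_orbit_steps_le_geometric:
  assumes bm: "b_metric X d s" and TX: "\<forall>x\<in>X. T x \<in> X" and pa: "PA_contraction X d T \<alpha>"
    and "x \<in> X"
  shows "d ((T ^^ n) x) ((T ^^ Suc n) x) \<le> \<alpha> ^ n * (d x (T x) / (1 - \<alpha>))"
proof -
  obtain N where \<alpha>: "0 < \<alpha>" "\<alpha> < 1" and contr: "\<And>x y n. x \<in> X \<Longrightarrow> y \<in> X \<Longrightarrow> N \<le> n \<Longrightarrow>
      (\<Sum>k<n. d ((T ^^ Suc k) x) ((T ^^ Suc k) y)) \<le> \<alpha> * (\<Sum>k<n. d ((T ^^ k) x) ((T ^^ k) y))"
    using PA_contractionE[OF pa] by blast
  define a where "a k = d ((T ^^ k) x) ((T ^^ k) (T x))" for k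
  have "T x \<in> X" using TX \<open>x \<in> X\<close> by simp
  have "a k \<le> \<alpha> ^ k * (a 0 / (1 - \<alpha>))" for k
  proof (rule le_geometric_if_shifted_partial_sums_le)
    show "0 \<le> a k" for k
      unfolding a_def using bm funpow_closed[OF TX] \<open>x \<in> X\<close> \<open>T x \<in> X\<close> by (simp add: b_metric_nonneg)
    show "(\<Sum>k<n. a (Suc (k + j))) \<le> \<alpha> * (\<Sum>k<n. a (k + j))" if "N \<le> n" for j n
      using contr[OF funpow_closed[OF TX \<open>x \<in> X\<close>] funpow_closed[OF TX \<open>T x \<in> X\<close>] that, of j j]
      unfolding a_def by (simp add: funpow_add)
  qed (use \<alpha> in auto)
  then show ?thesis unfolding a_def by (simp add: funpow_Suc_right del: funpow.simps)
qed

lemma PA_contraction_orbit_converges_to_fixed_point: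
  assumes bm: "b_metric X d s" and complete: "b_complete X d" and TX: "\<forall>x\<in>X. T x \<in> X"
    and cont: "b_continuous X d T" and pa: "PA_contraction X d T \<alpha>" and "s * \<alpha> < 1"
    and "x \<in> X"
  shows "\<exists>p\<in>X. T p = p \<and> b_converges d (\<lambda>n. (T ^^ n) x) p"
proof -
  have orbitX: "(T ^^ n) x \<in> X" for n by (rule funpow_closed[OF TX \<open>x \<in> X\<close>])
  have "0 \<le> \<alpha>" using PA_contractionE[OF pa] by (meson less_imp_le)
  have "b_Cauchy d (\<lambda>n. (T ^^ n) x)"
    by (rule b_Cauchy_if_steps_le_geometric[where u = "\<lambda>n. (T ^^ n) x", OF bm orbitX \<open>0 \<le> \<alpha>\<close> \<open>s * \<alpha> < 1\<close>])
      (rule PA_contraction_orbit_steps_le_geometric[OF bm TX pa \<open>x \<in> X\<close>])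
  then obtain p where "p \<in> X" and lim: "b_converges d (\<lambda>n. (T ^^ n) x) p"
    using complete orbitX unfolding b_complete_def by (metis (no_types, lifting))
  moreover have "T p = p"
    by (rule b_converges_orbit_imp_fixed_point[OF bm TX cont \<open>x \<in> X\<close> \<open>p \<in> X\<close> lim])
  ultimately show ?thesis by blast
qed

theorem theorem1:
  fixes X :: "'a set" and d :: "'a \<Rightarrow> 'a \<Rightarrow> real" and s \<alpha> :: real and T :: "'a \<Rightarrow> 'a"
  assumes "b_metric X d s"
    and "b_complete X d"
    and "\<forall>x\<in>X. T x \<in> X"
    and "b_continuous X d T"
    and "PA_contraction X d T \<alpha>"
    and "s * \<alpha> < 1"
  shows "(\<exists>!p. p \<in> X \<and> T p = p) \<and>
         (\<forall>p\<in>X. T p = p \<longrightarrow> (\<forall>x\<in>X. b_converges d (\<lambda>n. (T ^^ n) x) p))"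
proof -
  note unique = PA_contraction_fixed_point_unique[OF assms(1,5)]
  note converges = PA_contraction_orbit_converges_to_fixed_point[OF assms]
  obtain x0 where "x0 \<in> X" using assms(1) unfolding b_metric_def by blast
  then have "\<exists>!p. p \<in> X \<and> T p = p" using converges unique by blast
  moreover have "b_converges d (\<lambda>n. (T ^^ n) x) p" if "p \<in> X" "T p = p" "x \<in> X" for p x
    using converges[OF \<open>x \<in> X\<close>] unique that by blast
  ultimately show ?thesis by blast
qed

end
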